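(* If $X$ is a discrete topological space, then $\mathrm{MG}(X)$ consists exactly of the cardinal $1$ together with all regular cardinals.
   Context: A linearly ordered Abelian group is an Abelian group with a linear order compatible with addition. For $x,y\in G_{>0}$, $x\asymp y$ iff $y\le nx$ and $x\le my$ for some $n,m\in\mathbb{Z}_{\ge1}$; $\mathrm{Arc}(G)=G_{>0}/\asymp$, ordered by $[x]\preceq[y]$ iff ($nx<y$ for all $n$) or $x\asymp y$; $\mathrm{Arc}(G)^\perp$ is $\mathrm{Arc}(G)$ with a new least element adjoined. For a bottomed linearly ordered set $S$ (least element $\perp_S$, $S^*=S\setminus\{\perp_S\}$), $\chi(S)$ is the least cardinal $\kappa>0$ such that some strictly decreasing family $(s_\alpha)_{\alpha<\kappa}$ in $S^*$ has every $t\in S^*$ bounded below by some $s_\alpha$. A $G$-metric on $X$: $d\colon X^2\to G$ with $d(x,y)=0\iff x=y$, $d\ge0$, symmetric, triangle inequality; $\mathrm{Met}(X;G)$ is the set of $G$-metrics generating the topology of $X$ via open balls of radii in $G_{>0}$. $\kappa\in\mathrm{MG}(X)$ iff some linearly ordered Abelian group $G$ with $\chi(\mathrm{Arc}(G)^\perp)=\kappa$ has $\mathrm{Met}(X;G)\ne\emptyset$. *)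

theory Defs
  imports "HOL-Analysis.Analysis"
begin

record 'g loag =
  gcar  :: "'g set"
  gadd  :: "'g \<Rightarrow> 'g \<Rightarrow> 'g"
  gzero :: "'g"
  gle   :: "'g \<Rightarrow> 'g \<Rightarrow> bool"

definition is_loag :: "'g loag \<Rightarrow> bool" where
  "is_loag G \<longleftrightarrow>
     gzero G \<in> gcar G \<and>
     (\<forall>x\<in>gcar G. \<forall>y\<in>gcar G. gadd G x y \<in> gcar G) \<and>
     (\<forall>x\<in>gcar G. \<forall>y\<in>gcar G. \<forall>z\<in>gcar G. gadd G (gadd G x y) z = gadd G x (gadd G y z)) \<and>
     (\<forall>x\<in>gcar G. \<forall>y\<in>gcar G. gadd G x y = gadd G y x) \<and>
     (\<forall>x\<in>gcar G. gadd G (gzero G) x = x) \<and>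
     (\<forall>x\<in>gcar G. \<exists>y\<in>gcar G. gadd G x y = gzero G) \<and>
     (\<forall>x\<in>gcar G. gle G x x) \<and>
     (\<forall>x\<in>gcar G. \<forall>y\<in>gcar G. gle G x y \<and> gle G y x \<longrightarrow> x = y) \<and>
     (\<forall>x\<in>gcar G. \<forall>y\<in>gcar G. \<forall>z\<in>gcar G. gle G x y \<and> gle G y z \<longrightarrow> gle G x z) \<and>
     (\<forall>x\<in>gcar G. \<forall>y\<in>gcar G. gle G x y \<or> gle G y x) \<and>
     (\<forall>x\<in>gcar G. \<forall>y\<in>gcar G. \<forall>z\<in>gcar G. gle G x y \<longrightarrow> gle G (gadd G x z) (gadd G y z))"

definition glt :: "'g loag \<Rightarrow> 'g \<Rightarrow> 'g \<Rightarrow> bool" where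
  "glt G x y \<longleftrightarrow> gle G x y \<and> x \<noteq> y"

primrec nsmul :: "'g loag \<Rightarrow> nat \<Rightarrow> 'g \<Rightarrow> 'g" where
  "nsmul G 0 x = gzero G"
| "nsmul G (Suc n) x = gadd G x (nsmul G n x)"

definition gpos :: "'g loag \<Rightarrow> 'g set" where
  "gpos G = {x \<in> gcar G. glt G (gzero G) x}"

definition arch_eq :: "'g loag \<Rightarrow> 'g \<Rightarrow> 'g \<Rightarrow> bool" where
  "arch_eq G x y \<longleftrightarrow> (\<exists>n\<ge>1. gle G y (nsmul G n x)) \<and> (\<exists>m\<ge>1. gle G x (nsmul G m y))"

definition arch_class :: "'g loag \<Rightarrow> 'g \<Rightarrow> 'g set" where
  "arch_class G x = {y \<in> gpos G. arch_eq G x y}"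

definition Arc :: "'g loag \<Rightarrow> 'g set set" where
  "Arc G = arch_class G ` gpos G"

definition arc_le :: "'g loag \<Rightarrow> 'g set \<Rightarrow> 'g set \<Rightarrow> bool" where
  "arc_le G A B \<longleftrightarrow> (\<exists>x\<in>gpos G. \<exists>y\<in>gpos G. A = arch_class G x \<and> B = arch_class G y \<and>
      ((\<forall>n\<ge>1. glt G (nsmul G n x) y) \<or> arch_eq G x y))"

text \<open>A bottomed linearly ordered set is given by a carrier, an order and its least element.
  Arc(G)^\<bottom>: Arc(G) with a new least element None adjoined.\<close>
definition Arc_bot_carrier :: "'g loag \<Rightarrow> 'g set option set" where
  "Arc_bot_carrier G = insert None (Some ` Arc G)"

fun Arc_bot_le :: "'g loag \<Rightarrow> 'g set option \<Rightarrow> 'g set option \<Rightarrow> bool" where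
  "Arc_bot_le G None _ = True"
| "Arc_bot_le G (Some A) None = False"
| "Arc_bot_le G (Some A) (Some B) = arc_le G A B"

text \<open>A cardinal \<kappa> (a cardinal well-order, indexing the family by the ordinals \<alpha> < \<kappa>)
  admits a strictly decreasing family in S* = S - {b0} such that every t in S* is
  bounded below by some member of the family.\<close>
definition coinitial_family ::
  "'s set \<Rightarrow> ('s \<Rightarrow> 's \<Rightarrow> bool) \<Rightarrow> 's \<Rightarrow> 'k rel \<Rightarrow> bool" where
  "coinitial_family S le b0 \<kappa> \<longleftrightarrow>
     (\<exists>s :: 'k \<Rightarrow> 's.
        s ` Field \<kappa> \<subseteq> S - {b0} \<and>
        (\<forall>\<alpha>\<in>Field \<kappa>. \<forall>\<beta>\<in>Field \<kappa>. (\<alpha>, \<beta>) \<in> \<kappa> \<and> \<alpha> \<noteq> \<beta> \<longrightarrow> le (s \<beta>) (s \<alpha>) \<and> s \<beta> \<noteq> s \<alpha>) \<and>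
        (\<forall>t\<in>S - {b0}. \<exists>\<alpha>\<in>Field \<kappa>. le (s \<alpha>) t))"

text \<open>Minimality is tested against cardinals carried by the type of S, which is no
  restriction since any such family embeds injectively into S.\<close>
definition is_chi :: "'s set \<Rightarrow> ('s \<Rightarrow> 's \<Rightarrow> bool) \<Rightarrow> 's \<Rightarrow> 'k rel \<Rightarrow> bool" where
  "is_chi S le b0 \<kappa> \<longleftrightarrow>
     Card_order \<kappa> \<and> Field \<kappa> \<noteq> {} \<and> coinitial_family S le b0 \<kappa> \<and>
     (\<forall>\<mu> :: 's rel. Card_order \<mu> \<and> Field \<mu> \<noteq> {} \<and> coinitial_family S le b0 \<mu> \<longrightarrow> (\<kappa>, \<mu>) \<in> ordLeq)"

definition is_gmetric :: "'g loag \<Rightarrow> 'a set \<Rightarrow> ('a \<Rightarrow> 'a \<Rightarrow> 'g) \<Rightarrow> bool" where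
  "is_gmetric G M d \<longleftrightarrow>
     (\<forall>x\<in>M. \<forall>y\<in>M. d x y \<in> gcar G) \<and>
     (\<forall>x\<in>M. \<forall>y\<in>M. d x y = gzero G \<longleftrightarrow> x = y) \<and>
     (\<forall>x\<in>M. \<forall>y\<in>M. gle G (gzero G) (d x y)) \<and>
     (\<forall>x\<in>M. \<forall>y\<in>M. d x y = d y x) \<and>
     (\<forall>x\<in>M. \<forall>y\<in>M. \<forall>z\<in>M. gle G (d x z) (gadd G (d x y) (d y z)))"

definition gball :: "'g loag \<Rightarrow> 'a set \<Rightarrow> ('a \<Rightarrow> 'a \<Rightarrow> 'g) \<Rightarrow> 'a \<Rightarrow> 'g \<Rightarrow> 'a set" where
  "gball G M d x r = {y \<in> M. glt G (d x y) r}"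

definition Met :: "'a topology \<Rightarrow> 'g loag \<Rightarrow> ('a \<Rightarrow> 'a \<Rightarrow> 'g) set" where
  "Met X G = {d. is_gmetric G (topspace X) d \<and>
     (\<forall>U. openin X U \<longleftrightarrow>
        U \<subseteq> topspace X \<and> (\<forall>x\<in>U. \<exists>r\<in>gpos G. gball G (topspace X) d x r \<subseteq> U))}"

text \<open>\<kappa> \<in> MG(X), witnessed by a linearly ordered Abelian group carried by the type 'g.\<close>
definition in_MG_via :: "'a topology \<Rightarrow> 'k rel \<Rightarrow> 'g itself \<Rightarrow> bool" where
  "in_MG_via X \<kappa> _ \<longleftrightarrow>
     (\<exists>(G :: 'g loag) (c :: 'g set option rel).
        is_loag G \<and> is_chi (Arc_bot_carrier G) (Arc_bot_le G) None c \<and> (c, \<kappa>) \<in> ordIso \<and>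
        Met X G \<noteq> {})"

end

theory Submission
  imports Defs "HOL-Library.Function_Algebras"
begin

(*
  If S* has a least element, chi(S) = 1. Otherwise a coinitial strictly decreasing family indexed
  by the cardinal chi = chi(S) has no last index, so chi is infinite. Restricted to a cofinal subset
  of chi on which the order of chi is itself a cardinal of the least cofinal size cf(chi), the family
  stays coinitial, so minimality of chi gives chi <= cf(chi): chi is regular. This holds for every
  bottomed linear order, so MG(X) consists of 1 and regular cardinals for every space X.

  Conversely, for kappa = 1 or regular, let G = Z^kappa be ordered lexicographically along kappa.
  The archimedean class of a positive element depends only on its leading index, later indices
  giving smaller classes, so the classes of the unit vectors form a coinitial strictly decreasing
  kappa-sequence in Arc(G), while the leading indices of any coinitial family form a cofinal subset
  of kappa; regularity then gives chi(Arc(G)^bot) = kappa. On a discrete space the G-metric taking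
  one positive value off the diagonal has singleton balls, so it generates the topology.
*)

unbundle cardinal_syntax

section \<open>Cofinal subsets of well-orders\<close>

lemma Well_order_antisymD: "Well_order r \<Longrightarrow> (i, j) \<in> r \<Longrightarrow> (j, i) \<in> r \<Longrightarrow> i = j"
  using wo_rel.ANTISYM antisymD by (metis wo_rel_def)

lemma Well_order_transD: "Well_order r \<Longrightarrow> (i, j) \<in> r \<Longrightarrow> (j, l) \<in> r \<Longrightarrow> (i, l) \<in> r"
  using wo_rel.TRANS transD by (metis wo_rel_def)

lemma Well_order_total: "Well_order r \<Longrightarrow> i \<in> Field r \<Longrightarrow> j \<in> Field r \<Longrightarrow> (i, j) \<in> r \<or> (j, i) \<in> r"
  using wo_rel.TOTALS by (auto simp: wo_rel_def)

lemma Well_order_refl: "Well_order r \<Longrightarrow> i \<in> Field r \<Longrightarrow> (i, i) \<in> r"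
  using wo_rel.REFL by (auto simp: wo_rel_def dest: refl_onD)

lemma compat_inj_on_increasing:
  assumes "Well_order r" and "compat r r f" and "inj_on f (Field r)" and "f ` Field r \<subseteq> Field r"
    and "x \<in> Field r"
  shows "(x, f x) \<in> r"
proof -
  interpret r: wo_rel r using assms(1) by (simp add: wo_rel_def)
  show ?thesis
    using \<open>x \<in> Field r\<close>
  proof (induction x rule: r.well_order_induct)
    case (1 x)
    show ?case
    proof (rule ccontr)
      assume "(x, f x) \<notin> r"
      moreover have fx: "f x \<in> Field r" using 1 assms(4) by blast
      ultimately have "(f x, x) \<in> r" "f x \<noteq> x"
        using 1 r.TOTALS r.REFL by (auto dest: refl_onD)
      then have "(f x, f (f x)) \<in> r" using 1 fx by blast
      moreover have "(f (f x), f x) \<in> r" using assms(2) \<open>(f x, x) \<in> r\<close> unfolding compat_def by blast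
      ultimately have "f (f x) = f x" using Well_order_antisymD[OF assms(1)] by blast
      then show False using assms(3) fx 1 \<open>f x \<noteq> x\<close> unfolding inj_on_def by blast
    qed
  qed
qed

lemma Restr_ordLeq:
  assumes "Well_order r" and "A \<subseteq> Field r"
  shows "Restr r A \<le>o r"
proof (rule ccontr)
  let ?w = "Restr r A"
  have "Well_order ?w" using assms(1) by (rule Well_order_Restr)
  moreover assume "\<not> ?w \<le>o r"
  ultimately have "r <o ?w" using ordLess_or_ordLeq[OF assms(1)] by blast
  then obtain a f where a: "a \<in> Field ?w" and "iso r (Restr ?w (underS ?w a)) f"
    using ordLess_iff_ordIso_Restr[OF \<open>Well_order ?w\<close> assms(1)] unfolding ordIso_def by blast
  then have f_bij: "bij_betw f (Field r) (Field (Restr ?w (underS ?w a)))"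
    and f_compat: "compat r (Restr ?w (underS ?w a)) f"
    using iso_iff3[OF assms(1) Well_order_Restr[OF \<open>Well_order ?w\<close>]] by auto
  have f_below: "(f x, a) \<in> r \<and> f x \<noteq> a" if "x \<in> Field r" for x
  proof -
    have "f x \<in> underS ?w a" using bij_betwE[OF f_bij] that Field_Restr_subset[of ?w "underS ?w a"] by blast
    then show ?thesis unfolding underS_def by blast
  qed
  have a_Field: "a \<in> Field r" using a Field_Restr_subset[of r A] assms(2) by blast
  have "(a, f a) \<in> r"
  proof (rule compat_inj_on_increasing[OF assms(1)])
    show "compat r r f" using f_compat unfolding compat_def by blast
    show "inj_on f (Field r)" using f_bij by (rule bij_betw_imp_inj_on)
    show "f ` Field r \<subseteq> Field r" using f_below by (auto intro: FieldI1)
    show "a \<in> Field r" by (rule a_Field)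
  qed
  then show False using f_below[OF a_Field] Well_order_antisymD[OF assms(1)] by blast
qed

lemma finite_Partial_order_not_cofinal:
  assumes "Partial_order r" and "finite (Field r)" and "Field r \<noteq> {}"
  shows "\<not> cofinal A r"
proof
  assume cof: "cofinal A r"
  have "r \<subseteq> Field r \<times> Field r" by (auto intro: FieldI1 FieldI2)
  then have "finite r" using finite_subset finite_cartesian_product[OF assms(2) assms(2)] by auto
  obtain x where "x \<in> Field r" using assms(3) by blast
  then show False
  proof (rule finite_Partial_order_induct[OF assms(1) _ \<open>finite r\<close>, of x "\<lambda>_. False"])
    fix y assume "y \<in> Field r" and IH: "\<And>z. z \<in> aboveS r y \<Longrightarrow> False"
    then obtain z where "y \<noteq> z" "(y, z) \<in> r" using cof unfolding cofinal_def by blast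
    then show False using IH[of z] by (auto simp: aboveS_def intro: FieldI2)
  qed
qed

lemma cofinal_records:
  assumes r: "Well_order r" and l: "Well_order l" and "Field l = K" and "K \<subseteq> Field r"
    and "cofinal K r"
  defines "T \<equiv> {k \<in> K. \<forall>k' \<in> K. (k', k) \<in> l \<longrightarrow> (k', k) \<in> r}"
  shows "cofinal T r" and "Restr r T = Restr l T"
proof -
  interpret l: wo_rel l using l by (simp add: wo_rel_def)
  have T_K: "T \<subseteq> K" and T_below: "\<And>k k'. k \<in> T \<Longrightarrow> k' \<in> K \<Longrightarrow> (k', k) \<in> l \<Longrightarrow> (k', k) \<in> r"
    unfolding T_def by blast+
  show "cofinal T r"
    unfolding cofinal_def
  proof
    fix a assume a: "a \<in> Field r"
    let ?U = "{k \<in> K. a \<noteq> k \<and> (a, k) \<in> r}"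
    have "?U \<noteq> {}" using \<open>cofinal K r\<close> a unfolding cofinal_def by blast
    moreover have "?U \<subseteq> Field l" using \<open>Field l = K\<close> by blast
    ultimately have m: "l.minim ?U \<in> ?U" and m_least: "\<And>k. k \<in> ?U \<Longrightarrow> (l.minim ?U, k) \<in> l"
      using l.minim_in l.minim_least by auto
    have "l.minim ?U \<in> T"
      unfolding T_def
    proof (intro CollectI conjI ballI impI)
      fix k' assume k': "k' \<in> K" "(k', l.minim ?U) \<in> l"
      show "(k', l.minim ?U) \<in> r"
      proof (cases "k' = l.minim ?U")
        case True
        then show ?thesis using m \<open>K \<subseteq> Field r\<close> Well_order_refl[OF r] by blast
      next
        case False
        then have "k' \<notin> ?U" using m_least k' Well_order_antisymD[OF l] by blast
        then have "(k', a) \<in> r"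
          using k' a \<open>K \<subseteq> Field r\<close> Well_order_total[OF r] Well_order_refl[OF r] by blast
        then show ?thesis using m Well_order_transD[OF r] by blast
      qed
    qed (use m in blast)
    then show "\<exists>b \<in> T. a \<noteq> b \<and> (a, b) \<in> r" using m by blast
  qed
  show "Restr r T = Restr l T"
  proof (intro set_eqI iffI)
    fix p assume p: "p \<in> Restr l T"
    then show "p \<in> Restr r T" using T_K T_below by blast
  next
    fix p assume p: "p \<in> Restr r T"
    then obtain x y where xy: "p = (x, y)" "x \<in> T" "y \<in> T" "(x, y) \<in> r" by blast
    have "(x, y) \<in> l"
    proof (rule ccontr)
      assume "(x, y) \<notin> l"
      moreover have "x \<in> Field l" "y \<in> Field l" using xy T_K \<open>Field l = K\<close> by auto
      ultimately have "(y, x) \<in> l" "x \<noteq> y" using Well_order_total[OF l] Well_order_refl[OF l] by blast+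
      then have "(y, x) \<in> r" using xy T_K T_below by blast
      then show False using xy \<open>x \<noteq> y\<close> Well_order_antisymD[OF r] by blast
    qed
    then show "p \<in> Restr l T" using xy by blast
  qed
qed

lemma exists_cofinal_Card_order_Restr:
  assumes r: "Well_order r" and "A \<subseteq> Field r" and "cofinal A r"
  obtains T where "T \<subseteq> Field r" and "cofinal T r" and "Card_order (Restr r T)"
    and "\<And>K. K \<subseteq> Field r \<Longrightarrow> cofinal K r \<Longrightarrow> |T| \<le>o |K|"
proof -
  let ?R = "{|K| | K. K \<subseteq> Field r \<and> cofinal K r}"
  have "\<exists>l \<in> ?R. \<forall>l' \<in> ?R. l \<le>o l'"
    using assms by (intro exists_minim_Card_order) (auto simp: card_of_Card_order)
  then obtain K0 where K0: "K0 \<subseteq> Field r" "cofinal K0 r"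
    and K0_least: "\<And>K. K \<subseteq> Field r \<Longrightarrow> cofinal K r \<Longrightarrow> |K0| \<le>o |K|"
    by blast
  let ?l = "|K0|"
  define T where "T = {k \<in> K0. \<forall>k' \<in> K0. (k', k) \<in> ?l \<longrightarrow> (k', k) \<in> r}"
  have T: "cofinal T r" "Restr r T = Restr ?l T"
    using cofinal_records[OF r card_of_Well_order Field_card_of K0] unfolding T_def by blast+
  have "T \<subseteq> K0" unfolding T_def by blast
  then have "T \<subseteq> Field r" using K0(1) by blast
  have "Restr r T \<le>o |K0|"
    using T(2) Restr_ordLeq[OF card_of_Well_order] \<open>T \<subseteq> K0\<close> by (simp add: Field_card_of)
  also have "|K0| \<le>o |T|" using K0_least \<open>T \<subseteq> Field r\<close> T(1) .
  also have "|T| = |Field (Restr r T)|"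
    using Refl_Field_Restr2[OF wo_rel.REFL \<open>T \<subseteq> Field r\<close>] r by (simp add: wo_rel_def)
  finally have "Card_order (Restr r T)" by (simp only: Card_order_iff_ordLeq_card_of)
  moreover have "|T| \<le>o |K|" if "K \<subseteq> Field r" "cofinal K r" for K
    using card_of_mono1[OF \<open>T \<subseteq> K0\<close>] K0_least[OF that] by (rule ordLeq_transitive)
  ultimately show thesis using that \<open>T \<subseteq> Field r\<close> T(1) by blast
qed

section \<open>The invariant chi\<close>

lemma coinitial_family_Restr_cofinal:
  assumes le_trans: "transp_on (S - {b}) le" and c: "Well_order c"
    and "coinitial_family S le b c" and "T \<subseteq> Field c" and "cofinal T c"
  shows "coinitial_family S le b (Restr c T)"
proof -
  obtain s where s_in: "s ` Field c \<subseteq> S - {b}"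
    and s_decr: "\<forall>\<alpha>\<in>Field c. \<forall>\<beta>\<in>Field c. (\<alpha>, \<beta>) \<in> c \<and> \<alpha> \<noteq> \<beta> \<longrightarrow> le (s \<beta>) (s \<alpha>) \<and> s \<beta> \<noteq> s \<alpha>"
    and s_coinitial: "\<forall>t \<in> S - {b}. \<exists>\<alpha> \<in> Field c. le (s \<alpha>) t"
    using assms(3) unfolding coinitial_family_def by blast
  have Field_T: "Field (Restr c T) = T"
    using Refl_Field_Restr2[OF wo_rel.REFL \<open>T \<subseteq> Field c\<close>] c by (simp add: wo_rel_def)
  have "\<exists>\<beta> \<in> T. le (s \<beta>) t" if t: "t \<in> S - {b}" for t
  proof -
    obtain \<alpha> where \<alpha>: "\<alpha> \<in> Field c" "le (s \<alpha>) t" using s_coinitial t by blast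
    then obtain \<beta> where \<beta>: "\<beta> \<in> T" "\<alpha> \<noteq> \<beta>" "(\<alpha>, \<beta>) \<in> c"
      using \<open>cofinal T c\<close> unfolding cofinal_def by blast
    then have "le (s \<beta>) (s \<alpha>)" using s_decr \<alpha>(1) \<open>T \<subseteq> Field c\<close> by blast
    then have "le (s \<beta>) t"
      using transp_onD[OF le_trans _ _ t _ \<alpha>(2)] s_in \<alpha>(1) \<beta>(1) \<open>T \<subseteq> Field c\<close> by blast
    then show ?thesis using \<beta>(1) by blast
  qed
  moreover have "s ` T \<subseteq> S - {b}" using s_in \<open>T \<subseteq> Field c\<close> by blast
  moreover have "\<forall>\<alpha>\<in>T. \<forall>\<beta>\<in>T. (\<alpha>, \<beta>) \<in> Restr c T \<and> \<alpha> \<noteq> \<beta> \<longrightarrow> le (s \<beta>) (s \<alpha>) \<and> s \<beta> \<noteq> s \<alpha>"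
    using s_decr \<open>T \<subseteq> Field c\<close> by blast
  ultimately show ?thesis unfolding coinitial_family_def Field_T by blast
qed

lemma cofinal_Field_if_no_least:
  assumes le_trans: "transp_on (S - {b}) le" and c: "Well_order c"
    and "coinitial_family S le b c" and no_least: "\<nexists>m. m \<in> S - {b} \<and> (\<forall>t \<in> S - {b}. le m t)"
  shows "cofinal (Field c) c"
  unfolding cofinal_def
proof
  obtain s where s_in: "s ` Field c \<subseteq> S - {b}"
    and s_decr: "\<forall>\<alpha>\<in>Field c. \<forall>\<beta>\<in>Field c. (\<alpha>, \<beta>) \<in> c \<and> \<alpha> \<noteq> \<beta> \<longrightarrow> le (s \<beta>) (s \<alpha>) \<and> s \<beta> \<noteq> s \<alpha>"
    and s_coinitial: "\<forall>t \<in> S - {b}. \<exists>\<alpha> \<in> Field c. le (s \<alpha>) t"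
    using assms(3) unfolding coinitial_family_def by blast
  fix \<alpha> assume \<alpha>: "\<alpha> \<in> Field c"
  then obtain t where t: "t \<in> S - {b}" "\<not> le (s \<alpha>) t" using no_least s_in by blast
  then obtain \<beta> where \<beta>: "\<beta> \<in> Field c" "le (s \<beta>) t" using s_coinitial by blast
  have "\<not> le (s \<alpha>) (s \<beta>)"
    using transp_onD[OF le_trans _ _ t(1) _ \<beta>(2)] t(2) s_in \<alpha> \<beta>(1) by blast
  then have "(\<alpha>, \<beta>) \<in> c" "\<alpha> \<noteq> \<beta>"
    using s_decr \<alpha> \<beta> t(2) Well_order_total[OF c \<alpha> \<beta>(1)] by auto
  then show "\<exists>\<beta> \<in> Field c. \<alpha> \<noteq> \<beta> \<and> (\<alpha>, \<beta>) \<in> c" using \<beta>(1) by blast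
qed

abbreviation one_or_regularCard :: "'k rel \<Rightarrow> bool" where
  "one_or_regularCard \<kappa> \<equiv>
     (finite (Field \<kappa>) \<and> card (Field \<kappa>) = 1) \<or> (infinite (Field \<kappa>) \<and> regularCard \<kappa>)"

lemma is_chi_one_or_regularCard:
  fixes S :: "'s set" and c :: "'s rel"
  assumes le_trans: "transp_on (S - {b}) le" and chi: "is_chi S le b c"
  shows "one_or_regularCard c"
proof -
  have c: "Card_order c" "Field c \<noteq> {}" "coinitial_family S le b c"
    and least: "\<And>\<mu> :: 's rel. Card_order \<mu> \<Longrightarrow> Field \<mu> \<noteq> {} \<Longrightarrow>
      coinitial_family S le b \<mu> \<Longrightarrow> c \<le>o \<mu>"
    using chi unfolding is_chi_def by blast+
  have W: "Well_order c" using c(1) by (rule card_order_on_well_order_on)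
  show ?thesis
  proof (cases "\<exists>m. m \<in> S - {b} \<and> (\<forall>t \<in> S - {b}. le m t)")
    case True
    then obtain m where m: "m \<in> S - {b}" "\<forall>t \<in> S - {b}. le m t" by blast
    have "coinitial_family S le b |{m}|"
      unfolding coinitial_family_def Field_card_of using m by (intro exI[of _ "\<lambda>_. m"]) auto
    then have "c \<le>o |{m}|" using least[OF card_of_Card_order] by (simp add: Field_card_of)
    then have "|Field c| \<le>o |{m}|" using card_of_Field_ordIso[OF c(1)] ordIso_ordLeq_trans by blast
    then obtain f where "inj_on f (Field c)" "f ` Field c \<subseteq> {m}" by (auto simp: card_of_ordLeq[symmetric])
    moreover obtain a where "a \<in> Field c" using c(2) by blast
    ultimately have "Field c = {a}" unfolding inj_on_def by blast
    then show ?thesis by simp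
  next
    case False
    then have "cofinal (Field c) c" using cofinal_Field_if_no_least[OF le_trans W c(3)] by blast
    then have "infinite (Field c)"
      using finite_Partial_order_not_cofinal W c(2) by (auto simp: well_order_on_def linear_order_on_def)
    moreover have "regularCard c"
      unfolding regularCard_def
    proof (intro allI impI)
      fix K assume K: "K \<subseteq> Field c \<and> cofinal K c"
      then obtain T where T: "T \<subseteq> Field c" "cofinal T c" "Card_order (Restr c T)"
        and T_least: "\<And>K. K \<subseteq> Field c \<Longrightarrow> cofinal K c \<Longrightarrow> |T| \<le>o |K|"
        using exists_cofinal_Card_order_Restr[OF W] by blast
      have Field_T: "Field (Restr c T) = T"
        using Refl_Field_Restr2[OF wo_rel.REFL T(1)] W by (simp add: wo_rel_def)
      have "T \<noteq> {}" using T(2) c(2) unfolding cofinal_def by blast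
      then have "c \<le>o Restr c T"
        using least T(3) coinitial_family_Restr_cofinal[OF le_trans W c(3) T(1,2)] Field_T by blast
      also have "Restr c T \<le>o |T|"
        using T(3) Field_T by (metis Card_order_iff_ordLeq_card_of)
      also have "|T| \<le>o |K|" using T_least K by blast
      finally have "c \<le>o |K|" .
      moreover have "|K| \<le>o c"
        using card_of_mono1[of K "Field c"] K card_of_Field_ordIso[OF c(1)] ordLeq_ordIso_trans by blast
      ultimately show "( |K|, c) \<in> ordIso" by (simp add: ordIso_iff_ordLeq)
    qed
    ultimately show ?thesis by blast
  qed
qed

lemma one_or_regularCard_ordIso:
  assumes "Card_order c" and "(c, \<kappa>) \<in> ordIso" and "one_or_regularCard c"
  shows "one_or_regularCard \<kappa>"
proof -
  obtain f where f: "bij_betw f (Field c) (Field \<kappa>)"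
    using card_of_cong[OF assms(2)] card_of_ordIso by blast
  have "regularCard \<kappa>" if "infinite (Field c)" "regularCard c"
    using regularCard_ordIso[OF assms(2)] that assms(1) by (simp add: cinfinite_def)
  then show ?thesis
    using assms(3) bij_betw_finite[OF f] bij_betw_same_card[OF f] by auto
qed

lemma ex_is_chi_ordIso:
  fixes S :: "'s set" and \<kappa> :: "'k rel"
  assumes \<kappa>: "Card_order \<kappa>" "Field \<kappa> \<noteq> {}" "coinitial_family S le b \<kappa>"
    and least: "\<And>\<mu> :: 's rel. Card_order \<mu> \<Longrightarrow> Field \<mu> \<noteq> {} \<Longrightarrow>
      coinitial_family S le b \<mu> \<Longrightarrow> \<kappa> \<le>o \<mu>"
  shows "\<exists>c :: 's rel. is_chi S le b c \<and> (c, \<kappa>) \<in> ordIso"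
proof -
  obtain s where s_in: "s ` Field \<kappa> \<subseteq> S - {b}"
    and s_decr: "\<forall>\<alpha>\<in>Field \<kappa>. \<forall>\<beta>\<in>Field \<kappa>. (\<alpha>, \<beta>) \<in> \<kappa> \<and> \<alpha> \<noteq> \<beta> \<longrightarrow> le (s \<beta>) (s \<alpha>) \<and> s \<beta> \<noteq> s \<alpha>"
    and s_coinitial: "\<forall>t \<in> S - {b}. \<exists>\<alpha> \<in> Field \<kappa>. le (s \<alpha>) t"
    using \<kappa>(3) unfolding coinitial_family_def by blast
  have W: "Well_order \<kappa>" using \<kappa>(1) by (rule card_order_on_well_order_on)
  have "inj_on s (Field \<kappa>)"
  proof (rule inj_onI, rule ccontr)
    fix \<alpha> \<beta> assume "\<alpha> \<in> Field \<kappa>" "\<beta> \<in> Field \<kappa>" "s \<alpha> = s \<beta>" "\<alpha> \<noteq> \<beta>"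
    moreover have "(\<alpha>, \<beta>) \<in> \<kappa> \<or> (\<beta>, \<alpha>) \<in> \<kappa>"
      using Well_order_total[OF W \<open>\<alpha> \<in> Field \<kappa>\<close> \<open>\<beta> \<in> Field \<kappa>\<close>] .
    ultimately show False using s_decr by metis
  qed
  let ?c = "dir_image \<kappa> s"
  have iso: "(?c, \<kappa>) \<in> ordIso"
    using dir_image_ordIso[OF W \<open>inj_on s (Field \<kappa>)\<close>] by (rule ordIso_symmetric)
  have "Card_order ?c" using Card_order_ordIso2[OF \<kappa>(1) ordIso_symmetric[OF iso]] .
  moreover have "Field ?c \<noteq> {}" using \<kappa>(2) by (simp add: dir_image_Field)
  moreover have "coinitial_family S le b ?c"
    unfolding coinitial_family_def
  proof (intro exI[of _ id] conjI)
    show "id ` Field ?c \<subseteq> S - {b}" using s_in by (simp add: dir_image_Field)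
    show "\<forall>x\<in>Field ?c. \<forall>y\<in>Field ?c. (x, y) \<in> ?c \<and> x \<noteq> y \<longrightarrow> le (id y) (id x) \<and> id y \<noteq> id x"
      using s_decr unfolding dir_image_def by (auto intro: FieldI1 FieldI2)
    show "\<forall>t \<in> S - {b}. \<exists>x \<in> Field ?c. le (id x) t"
      using s_coinitial by (simp add: dir_image_Field)
  qed
  moreover have "?c \<le>o \<mu>"
    if "Card_order \<mu>" "Field \<mu> \<noteq> {}" "coinitial_family S le b \<mu>" for \<mu> :: "'s rel"
    using ordIso_ordLeq_trans[OF iso least[OF that]] .
  ultimately have "is_chi S le b ?c" unfolding is_chi_def by blast
  then show ?thesis using iso by blast
qed

section \<open>Linearly ordered Abelian groups\<close>

definition arch_le :: "'g loag \<Rightarrow> 'g \<Rightarrow> 'g \<Rightarrow> bool" where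
  "arch_le G x y \<longleftrightarrow> (\<exists>m \<ge> 1. gle G x (nsmul G m y))"

lemma Arc_bot_carrierE:
  assumes "t \<in> Arc_bot_carrier G - {None}"
  obtains x where "x \<in> gpos G" and "t = Some (arch_class G x)"
  using assms unfolding Arc_bot_carrier_def Arc_def by blast

context
  fixes G :: "'g loag"
  assumes G: "is_loag G"
begin

lemma
  shows gzero_closed: "gzero G \<in> gcar G"
  and gadd_closed: "x \<in> gcar G \<Longrightarrow> y \<in> gcar G \<Longrightarrow> gadd G x y \<in> gcar G"
  and gadd_assoc:
    "x \<in> gcar G \<Longrightarrow> y \<in> gcar G \<Longrightarrow> z \<in> gcar G \<Longrightarrow> gadd G (gadd G x y) z = gadd G x (gadd G y z)"
  and gadd_commute: "x \<in> gcar G \<Longrightarrow> y \<in> gcar G \<Longrightarrow> gadd G x y = gadd G y x"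
  and gadd_zero_left: "x \<in> gcar G \<Longrightarrow> gadd G (gzero G) x = x"
  and gle_refl: "x \<in> gcar G \<Longrightarrow> gle G x x"
  and gle_trans:
    "x \<in> gcar G \<Longrightarrow> y \<in> gcar G \<Longrightarrow> z \<in> gcar G \<Longrightarrow> gle G x y \<Longrightarrow> gle G y z \<Longrightarrow> gle G x z"
  and gle_total: "x \<in> gcar G \<Longrightarrow> y \<in> gcar G \<Longrightarrow> gle G x y \<or> gle G y x"
  and gadd_right_mono:
    "x \<in> gcar G \<Longrightarrow> y \<in> gcar G \<Longrightarrow> z \<in> gcar G \<Longrightarrow> gle G x y \<Longrightarrow> gle G (gadd G x z) (gadd G y z)"
  using G unfolding is_loag_def by metis+

lemma gadd_zero_right: "x \<in> gcar G \<Longrightarrow> gadd G x (gzero G) = x"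
  using gadd_commute[OF _ gzero_closed] gadd_zero_left by simp

lemma gle_gadd_nonneg: "x \<in> gcar G \<Longrightarrow> y \<in> gcar G \<Longrightarrow> gle G (gzero G) y \<Longrightarrow> gle G x (gadd G x y)"
  using gadd_right_mono[OF gzero_closed _ _, of y x] gadd_zero_left gadd_commute by simp

lemma gpos_closed: "x \<in> gpos G \<Longrightarrow> x \<in> gcar G"
  unfolding gpos_def by blast

lemma nsmul_closed: "x \<in> gcar G \<Longrightarrow> nsmul G n x \<in> gcar G"
  by (induction n) (simp_all add: gzero_closed gadd_closed)

lemma nsmul_one: "x \<in> gcar G \<Longrightarrow> nsmul G 1 x = x"
  by (simp add: gadd_zero_right)

lemma nsmul_add: "x \<in> gcar G \<Longrightarrow> nsmul G (m + n) x = gadd G (nsmul G m x) (nsmul G n x)"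
  by (induction m) (simp_all add: gadd_zero_left nsmul_closed gadd_assoc)

lemma nsmul_mult: "x \<in> gcar G \<Longrightarrow> nsmul G (m * n) x = nsmul G m (nsmul G n x)"
  by (induction m) (simp_all add: nsmul_add)

lemma nsmul_mono:
  assumes "x \<in> gcar G" and "y \<in> gcar G" and "gle G x y"
  shows "gle G (nsmul G n x) (nsmul G n y)"
proof (induction n)
  case 0
  show ?case by (simp add: gle_refl gzero_closed)
next
  case (Suc n)
  have nx: "nsmul G n x \<in> gcar G" and ny: "nsmul G n y \<in> gcar G"
    using assms by (simp_all add: nsmul_closed)
  have "gle G (gadd G x (nsmul G n x)) (gadd G y (nsmul G n x))"
    using gadd_right_mono[OF assms(1,2) nx assms(3)] .
  moreover have "gle G (gadd G (nsmul G n x) y) (gadd G (nsmul G n y) y)"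
    using gadd_right_mono[OF nx ny assms(2) Suc] .
  then have "gle G (gadd G y (nsmul G n x)) (gadd G y (nsmul G n y))"
    using gadd_commute[OF assms(2) nx] gadd_commute[OF assms(2) ny] by simp
  ultimately show ?case
    using gle_trans[OF gadd_closed[OF assms(1) nx] gadd_closed[OF assms(2) nx] gadd_closed[OF assms(2) ny]]
    by simp
qed

lemma arch_le_refl: "x \<in> gcar G \<Longrightarrow> arch_le G x x"
  unfolding arch_le_def using gle_refl nsmul_one by force

lemma arch_le_trans:
  assumes "x \<in> gcar G" "y \<in> gcar G" "z \<in> gcar G" and "arch_le G x y" "arch_le G y z"
  shows "arch_le G x z"
proof -
  obtain m k where "m \<ge> 1" "gle G x (nsmul G m y)" "k \<ge> 1" "gle G y (nsmul G k z)"
    using assms(4,5) unfolding arch_le_def by blast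
  moreover from this have "gle G (nsmul G m y) (nsmul G (m * k) z)"
    using nsmul_mono[OF assms(2) nsmul_closed[OF assms(3)]] nsmul_mult[OF assms(3)] by simp
  ultimately have "m * k \<ge> 1" "gle G x (nsmul G (m * k) z)"
    using gle_trans[OF assms(1) nsmul_closed[OF assms(2)] nsmul_closed[OF assms(3)]] by auto
  then show ?thesis unfolding arch_le_def by blast
qed

lemma arch_eq_iff: "arch_eq G x y \<longleftrightarrow> arch_le G y x \<and> arch_le G x y"
  unfolding arch_eq_def arch_le_def ..

lemma arch_eq_if_arch_class_eq:
  assumes "x \<in> gpos G" and "y \<in> gpos G" and "arch_class G x = arch_class G y"
  shows "arch_eq G x y"
proof -
  have "y \<in> arch_class G y"
    unfolding arch_class_def arch_eq_iff using assms(2) arch_le_refl gpos_closed by blast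
  then show ?thesis using assms(3) unfolding arch_class_def by blast
qed

lemma below_or_arch_eq_iff:
  assumes "x \<in> gcar G" and "y \<in> gcar G"
  shows "(\<forall>n \<ge> 1. glt G (nsmul G n x) y) \<or> arch_eq G x y \<longleftrightarrow> arch_le G x y"
proof
  assume "(\<forall>n \<ge> 1. glt G (nsmul G n x) y) \<or> arch_eq G x y"
  moreover have "gle G x (nsmul G 1 y)" if "glt G (nsmul G 1 x) y"
    using that unfolding glt_def by (simp only: nsmul_one assms)
  ultimately show "arch_le G x y" unfolding arch_eq_iff arch_le_def by blast
next
  assume "arch_le G x y"
  show "(\<forall>n \<ge> 1. glt G (nsmul G n x) y) \<or> arch_eq G x y"
  proof (cases "arch_le G y x")
    case True
    then show ?thesis using \<open>arch_le G x y\<close> by (simp add: arch_eq_iff)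
  next
    case False
    have "glt G (nsmul G n x) y" if "n \<ge> 1" for n
    proof -
      have "\<not> gle G y (nsmul G n x)" using False that unfolding arch_le_def by blast
      then show ?thesis
        using gle_total[OF nsmul_closed[OF assms(1)] assms(2), of n] gle_refl[OF assms(2)]
        unfolding glt_def by blast
    qed
    then show ?thesis by blast
  qed
qed

lemma arc_le_iff:
  assumes x: "x \<in> gpos G" and y: "y \<in> gpos G"
  shows "arc_le G (arch_class G x) (arch_class G y) \<longleftrightarrow> arch_le G x y"
proof
  assume "arc_le G (arch_class G x) (arch_class G y)"
  then obtain x' y' where x': "x' \<in> gpos G" "arch_class G x = arch_class G x'"
    and y': "y' \<in> gpos G" "arch_class G y = arch_class G y'"
    and "(\<forall>n \<ge> 1. glt G (nsmul G n x') y') \<or> arch_eq G x' y'"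
    unfolding arc_le_def by blast
  then have "arch_le G x' y'" using below_or_arch_eq_iff[OF gpos_closed gpos_closed] by blast
  moreover have "arch_le G x x'" using arch_eq_if_arch_class_eq[OF x x'] by (simp add: arch_eq_iff)
  moreover have "arch_le G y' y" using arch_eq_if_arch_class_eq[OF y y'] by (simp add: arch_eq_iff)
  ultimately show "arch_le G x y"
    using arch_le_trans[OF gpos_closed gpos_closed gpos_closed] x y x'(1) y'(1) by meson
next
  assume "arch_le G x y"
  then show "arc_le G (arch_class G x) (arch_class G y)"
    using x y below_or_arch_eq_iff[OF gpos_closed[OF x] gpos_closed[OF y]] unfolding arc_le_def by blast
qed

lemma transp_on_Arc_bot_le: "transp_on (Arc_bot_carrier G - {None}) (Arc_bot_le G)"
proof (rule transp_onI)
  fix a b d assume "a \<in> Arc_bot_carrier G - {None}" "b \<in> Arc_bot_carrier G - {None}"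
    "d \<in> Arc_bot_carrier G - {None}" and ab: "Arc_bot_le G a b" and bd: "Arc_bot_le G b d"
  then obtain x y z where x: "x \<in> gpos G" "a = Some (arch_class G x)"
    and y: "y \<in> gpos G" "b = Some (arch_class G y)" and z: "z \<in> gpos G" "d = Some (arch_class G z)"
    by (metis Arc_bot_carrierE)
  have "arch_le G x y" using ab x y arc_le_iff by simp
  moreover have "arch_le G y z" using bd y z arc_le_iff by simp
  ultimately have "arch_le G x z" using arch_le_trans[OF gpos_closed gpos_closed gpos_closed] x y z by meson
  then show "Arc_bot_le G a d" using arc_le_iff x z by simp
qed

lemma discrete_Met_nonempty:
  assumes "r \<in> gpos G" and X: "discrete_topology (topspace X) = X"
  shows "Met X G \<noteq> {}"
proof -
  define d where "d x y = (if x = y then gzero G else r)" for x y :: 'a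
  have r: "r \<in> gcar G" "gle G (gzero G) r" "r \<noteq> gzero G"
    using assms(1) unfolding gpos_def glt_def by auto
  have d_closed: "d x y \<in> gcar G" for x y using r(1) gzero_closed by (simp add: d_def)
  have d_nonneg: "gle G (gzero G) (d x y)" for x y
    using r(2) gle_refl[OF gzero_closed] by (simp add: d_def)
  have d_triangle: "gle G (d x z) (gadd G (d x y) (d y z))" for x y z
  proof -
    have grow: "gle G (d x y) (gadd G (d x y) (d y z))"
      using gle_gadd_nonneg[OF d_closed d_closed d_nonneg] .
    consider "x = z" | "x \<noteq> z" "x = y" | "x \<noteq> z" "x \<noteq> y" by blast
    then show ?thesis
    proof cases
      case 1
      then show ?thesis
        using gle_trans[OF gzero_closed d_closed gadd_closed[OF d_closed d_closed] d_nonneg grow]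
        by (simp add: d_def)
    next
      case 2
      then show ?thesis using gle_refl[OF r(1)] gadd_zero_left[OF r(1)] by (simp add: d_def)
    next
      case 3
      then show ?thesis using grow by (simp add: d_def)
    qed
  qed
  have "d x y = gzero G \<longleftrightarrow> x = y" "d x y = d y x" for x y
    using r(3) by (simp_all add: d_def)
  then have "is_gmetric G (topspace X) d"
    unfolding is_gmetric_def by (simp add: d_closed d_nonneg d_triangle)
  moreover have "gball G (topspace X) d x r \<subseteq> {x}" for x
  proof
    fix y assume "y \<in> gball G (topspace X) d x r"
    then have "glt G (d x y) r" unfolding gball_def by blast
    then show "y \<in> {x}" unfolding glt_def d_def by (cases "x = y") simp_all
  qed
  then have "\<forall>x\<in>U. \<exists>r\<in>gpos G. gball G (topspace X) d x r \<subseteq> U" for U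
    using assms(1) by blast
  moreover have "openin X U \<longleftrightarrow> U \<subseteq> topspace X" for U
    using openin_discrete_topology[of "topspace X" U] unfolding X .
  ultimately have "d \<in> Met X G" unfolding Met_def by simp
  then show ?thesis by blast
qed

end

section \<open>Lexicographic powers of the integers\<close>

definition lex_leading :: "'k rel \<Rightarrow> ('k \<Rightarrow> int) \<Rightarrow> 'k \<Rightarrow> bool" where
  "lex_leading K x i \<longleftrightarrow> 0 < x i \<and> (\<forall>j. x j \<noteq> 0 \<longrightarrow> (i, j) \<in> K)"

definition lex_pos :: "'k rel \<Rightarrow> ('k \<Rightarrow> int) \<Rightarrow> bool" where
  "lex_pos K x \<longleftrightarrow> (\<exists>i. lex_leading K x i)"

(* All integer families on Field K, not only finitely supported ones: the order is still
   lexicographic because every nonzero family has a K-least nonzero coordinate. *)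
definition lex_group :: "'k rel \<Rightarrow> ('k \<Rightarrow> int) loag" where
  "lex_group K =
     \<lparr>gcar = {x. \<forall>i. x i \<noteq> 0 \<longrightarrow> i \<in> Field K}, gadd = (+), gzero = 0,
      gle = (\<lambda>x y. x = y \<or> lex_pos K (y - x))\<rparr>"

lemma lex_group_simps [simp]:
  "gcar (lex_group K) = {x. \<forall>i. x i \<noteq> 0 \<longrightarrow> i \<in> Field K}"
  "gadd (lex_group K) = (+)"
  "gzero (lex_group K) = 0"
  "gle (lex_group K) x y \<longleftrightarrow> x = y \<or> lex_pos K (y - x)"
  unfolding lex_group_def by simp_all

lemma lex_leading_Field: "lex_leading K x i \<Longrightarrow> i \<in> Field K"
  unfolding lex_leading_def by (metis FieldI1 less_irrefl)

context
  fixes K :: "'k rel"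
  assumes K: "Well_order K"
begin

lemma lex_leading_add_le:
  assumes "lex_leading K x i" and "lex_leading K y j" and "(i, j) \<in> K"
  shows "lex_leading K (x + y) i"
proof -
  have "0 \<le> y i"
  proof (rule ccontr)
    assume "\<not> 0 \<le> y i"
    then have "(j, i) \<in> K" using assms(2) unfolding lex_leading_def by auto
    then have "i = j" using Well_order_antisymD[OF K] assms(3) by blast
    then show False using assms(2) \<open>\<not> 0 \<le> y i\<close> unfolding lex_leading_def by auto
  qed
  then have "0 < (x + y) i" using assms(1) unfolding lex_leading_def by simp
  moreover have "(i, l) \<in> K" if "(x + y) l \<noteq> 0" for l
  proof -
    have "x l \<noteq> 0 \<or> y l \<noteq> 0" using that by auto
    then show ?thesis using assms Well_order_transD[OF K] unfolding lex_leading_def by blast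
  qed
  ultimately show ?thesis unfolding lex_leading_def by blast
qed

lemma lex_pos_add:
  assumes "lex_pos K x" and "lex_pos K y"
  shows "lex_pos K (x + y)"
proof -
  obtain i j where i: "lex_leading K x i" and j: "lex_leading K y j"
    using assms unfolding lex_pos_def by blast
  have "(i, j) \<in> K \<or> (j, i) \<in> K" using Well_order_total[OF K lex_leading_Field[OF i] lex_leading_Field[OF j]] .
  then have "lex_leading K (x + y) i \<or> lex_leading K (y + x) j"
    using lex_leading_add_le[OF i j] lex_leading_add_le[OF j i] by blast
  then show ?thesis unfolding lex_pos_def by (metis add.commute)
qed

lemma not_lex_pos_both: "lex_pos K x \<Longrightarrow> \<not> lex_pos K (- x)"
proof
  assume "lex_pos K x" and "lex_pos K (- x)"
  then obtain i j where i: "lex_leading K x i" and j: "lex_leading K (- x) j"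
    unfolding lex_pos_def by blast
  have "x j \<noteq> 0" "(- x) i \<noteq> 0" using i j unfolding lex_leading_def by auto
  then have "(i, j) \<in> K" "(j, i) \<in> K" using i j unfolding lex_leading_def by blast+
  then have "i = j" by (rule Well_order_antisymD[OF K])
  then show False using i j unfolding lex_leading_def by simp
qed

lemma lex_pos_or_neg:
  assumes "\<forall>i. x i \<noteq> 0 \<longrightarrow> i \<in> Field K" and "x \<noteq> 0"
  shows "lex_pos K x \<or> lex_pos K (- x)"
proof -
  interpret K: wo_rel K using K by (simp add: wo_rel_def)
  let ?supp = "{i. x i \<noteq> 0}"
  have "?supp \<subseteq> Field K" "?supp \<noteq> {}" using assms by (auto simp: fun_eq_iff)
  then have m: "K.minim ?supp \<in> ?supp" and m_least: "\<And>j. x j \<noteq> 0 \<Longrightarrow> (K.minim ?supp, j) \<in> K"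
    using K.minim_in K.minim_least by auto
  show ?thesis
  proof (cases "0 < x (K.minim ?supp)")
    case True
    then have "lex_leading K x (K.minim ?supp)" unfolding lex_leading_def using m_least by blast
    then show ?thesis unfolding lex_pos_def by blast
  next
    case False
    then have "lex_leading K (- x) (K.minim ?supp)" unfolding lex_leading_def using m m_least by auto
    then show ?thesis unfolding lex_pos_def by blast
  qed
qed

lemma lex_group_is_loag: "is_loag (lex_group K)"
proof -
  let ?G = "lex_group K"
  have closed: "gadd ?G x y \<in> gcar ?G" if "x \<in> gcar ?G" "y \<in> gcar ?G" for x y
    using that by force
  have inverse: "\<exists>y \<in> gcar ?G. gadd ?G x y = gzero ?G" if "x \<in> gcar ?G" for x
    using that by (intro bexI[of _ "- x"]) simp_all
  have antisym: "x = y" if "gle ?G x y \<and> gle ?G y x" for x y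
    using that not_lex_pos_both[of "y - x"] by auto
  have trans: "gle ?G x z" if "gle ?G x y \<and> gle ?G y z" for x y z
    using that lex_pos_add[of "z - y" "y - x"] by auto
  have total: "gle ?G x y \<or> gle ?G y x" if "x \<in> gcar ?G" "y \<in> gcar ?G" for x y
  proof (cases "x = y")
    case False
    moreover have "i \<in> Field K" if "(y - x) i \<noteq> 0" for i
      using that \<open>x \<in> gcar ?G\<close> \<open>y \<in> gcar ?G\<close> by (cases "x i = 0") auto
    ultimately have "lex_pos K (y - x) \<or> lex_pos K (- (y - x))"
      by (intro lex_pos_or_neg) auto
    then show ?thesis by auto
  qed simp
  have compat: "gle ?G (gadd ?G x z) (gadd ?G y z)" if "gle ?G x y" for x y z
    using that by (simp add: algebra_simps)
  show ?thesis
    unfolding is_loag_def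
  proof (intro conjI ballI impI)
    fix x y assume "x \<in> gcar ?G" "y \<in> gcar ?G"
    then show "gadd ?G x y \<in> gcar ?G" "gle ?G x y \<or> gle ?G y x" by (rule closed, rule total)
  next
    fix x assume "x \<in> gcar ?G"
    then show "\<exists>y \<in> gcar ?G. gadd ?G x y = gzero ?G" by (rule inverse)
  next
    fix x y assume "gle ?G x y \<and> gle ?G y x"
    then show "x = y" by (rule antisym)
  next
    fix x y z assume "gle ?G x y \<and> gle ?G y z"
    then show "gle ?G x z" by (rule trans)
  next
    fix x y z assume "gle ?G x y"
    then show "gle ?G (gadd ?G x z) (gadd ?G y z)" by (rule compat)
  qed (simp_all add: algebra_simps)
qed

lemma nsmul_lex_group: "nsmul (lex_group K) n x = (\<lambda>i. int n * x i)"
  by (induction n) (auto simp: algebra_simps)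

lemma gpos_lex_group: "x \<in> gpos (lex_group K) \<longleftrightarrow> x \<in> gcar (lex_group K) \<and> lex_pos K x"
proof -
  have "x \<noteq> 0" if "lex_pos K x"
    using that unfolding lex_pos_def lex_leading_def by auto
  then show ?thesis unfolding gpos_def glt_def by auto
qed

lemma lex_leading_indicator: "a \<in> Field K \<Longrightarrow> lex_leading K (indicator {a}) a"
  unfolding lex_leading_def using Well_order_refl[OF K] by (auto simp: indicator_def)

lemma lex_leading_gpos: "lex_leading K x i \<Longrightarrow> x \<in> gpos (lex_group K)"
  unfolding gpos_lex_group lex_pos_def lex_leading_def by (auto intro: FieldI2)

lemma nsmul_less_lex_leading:
  assumes x: "lex_leading K x i" and y: "lex_leading K y j" and "(i, j) \<in> K" and "i \<noteq> j"
  shows "glt (lex_group K) (nsmul (lex_group K) n y) x"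
proof -
  have "y i = 0" using y assms(3,4) Well_order_antisymD[OF K] unfolding lex_leading_def by blast
  have "lex_leading K (x - (\<lambda>l. int n * y l)) i"
    unfolding lex_leading_def
  proof (intro conjI allI impI)
    show "0 < (x - (\<lambda>l. int n * y l)) i" using x \<open>y i = 0\<close> unfolding lex_leading_def by simp
    fix l assume "(x - (\<lambda>l. int n * y l)) l \<noteq> 0"
    then have "x l \<noteq> 0 \<or> y l \<noteq> 0" by auto
    then show "(i, l) \<in> K" using x y assms(3) Well_order_transD[OF K] unfolding lex_leading_def by blast
  qed
  moreover have "(\<lambda>l. int n * y l) \<noteq> x" using x \<open>y i = 0\<close> unfolding lex_leading_def by force
  ultimately show ?thesis unfolding glt_def nsmul_lex_group by (auto simp: lex_pos_def)
qed

lemma arch_le_lex_group_iff: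
  assumes x: "lex_leading K x i" and y: "lex_leading K y j"
  shows "arch_le (lex_group K) x y \<longleftrightarrow> (j, i) \<in> K"
proof
  assume "arch_le (lex_group K) x y"
  then obtain m where "gle (lex_group K) x (nsmul (lex_group K) m y)"
    unfolding arch_le_def by blast
  show "(j, i) \<in> K"
  proof (rule ccontr)
    assume "(j, i) \<notin> K"
    then have "(i, j) \<in> K" "i \<noteq> j"
      using Well_order_total[OF K lex_leading_Field[OF x] lex_leading_Field[OF y]]
        Well_order_refl[OF K lex_leading_Field[OF x]]
      by auto
    then have "glt (lex_group K) (nsmul (lex_group K) m y) x" by (rule nsmul_less_lex_leading[OF x y])
    then show False
      using \<open>gle (lex_group K) x _\<close> not_lex_pos_both[of "x - nsmul (lex_group K) m y"]
      unfolding glt_def by auto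
  qed
next
  assume "(j, i) \<in> K"
  show "arch_le (lex_group K) x y"
  proof (cases "i = j")
    case True
    define m where "m = nat (x i) + 1"
    have "1 \<le> y i" using y True unfolding lex_leading_def by simp
    then have "int m \<le> int m * y i" using mult_left_mono[of 1 "y i" "int m"] by simp
    moreover have "x i < int m" unfolding m_def using x unfolding lex_leading_def by simp
    ultimately have "0 < (\<lambda>l. int m * y l) i - x i" by simp
    moreover have "(i, l) \<in> K" if "(\<lambda>l. int m * y l) l - x l \<noteq> 0" for l
    proof -
      have "x l \<noteq> 0 \<or> y l \<noteq> 0" using that by auto
      then show ?thesis using x y True unfolding lex_leading_def by blast
    qed
    ultimately have "lex_leading K ((\<lambda>l. int m * y l) - x) i" unfolding lex_leading_def by simp
    then have "gle (lex_group K) x (nsmul (lex_group K) m y)"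
      unfolding nsmul_lex_group lex_group_simps lex_pos_def by blast
    then show ?thesis unfolding arch_le_def m_def by auto
  next
    case False
    then have "glt (lex_group K) (nsmul (lex_group K) 1 x) y"
      using nsmul_less_lex_leading[OF y x \<open>(j, i) \<in> K\<close>] by blast
    then have "gle (lex_group K) x (nsmul (lex_group K) 1 y)"
      unfolding glt_def nsmul_lex_group by auto
    then show ?thesis unfolding arch_le_def by blast
  qed
qed

lemma arc_le_lex_group_iff:
  assumes "lex_leading K x i" and "lex_leading K y j"
  shows "arc_le (lex_group K) (arch_class (lex_group K) x) (arch_class (lex_group K) y) \<longleftrightarrow> (j, i) \<in> K"
  using arc_le_iff[OF lex_group_is_loag lex_leading_gpos lex_leading_gpos] arch_le_lex_group_iff assms
  by blast

end

lemma coinitial_family_lex_group: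
  assumes K: "Well_order K"
  shows "coinitial_family (Arc_bot_carrier (lex_group K)) (Arc_bot_le (lex_group K)) None K"
proof -
  let ?G = "lex_group K"
  let ?s = "\<lambda>a. Some (arch_class ?G (indicator {a}))"
  have arc_le_indicator: "Arc_bot_le ?G (?s b) (?s a) \<longleftrightarrow> (a, b) \<in> K"
    if "a \<in> Field K" "b \<in> Field K" for a b
    using arc_le_lex_group_iff[OF K lex_leading_indicator[OF K] lex_leading_indicator[OF K]] that by simp
  have "?s a \<in> Arc_bot_carrier ?G - {None}" if "a \<in> Field K" for a
    using lex_leading_gpos[OF K lex_leading_indicator[OF K that]] unfolding Arc_bot_carrier_def Arc_def
    by blast
  then have "?s ` Field K \<subseteq> Arc_bot_carrier ?G - {None}" by blast
  moreover have "Arc_bot_le ?G (?s \<beta>) (?s \<alpha>) \<and> ?s \<beta> \<noteq> ?s \<alpha>"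
    if "\<alpha> \<in> Field K" "\<beta> \<in> Field K" "(\<alpha>, \<beta>) \<in> K" "\<alpha> \<noteq> \<beta>" for \<alpha> \<beta>
  proof
    show "Arc_bot_le ?G (?s \<beta>) (?s \<alpha>)" using arc_le_indicator that by blast
    show "?s \<beta> \<noteq> ?s \<alpha>"
    proof
      assume "?s \<beta> = ?s \<alpha>"
      then have "(\<beta>, \<alpha>) \<in> K"
        using arc_le_indicator[of \<beta> \<beta>] arc_le_indicator[of \<beta> \<alpha>] Well_order_refl[OF K] that by auto
      then show False using Well_order_antisymD[OF K] that by blast
    qed
  qed
  then have "\<forall>\<alpha>\<in>Field K. \<forall>\<beta>\<in>Field K. (\<alpha>, \<beta>) \<in> K \<and> \<alpha> \<noteq> \<beta> \<longrightarrow>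
      Arc_bot_le ?G (?s \<beta>) (?s \<alpha>) \<and> ?s \<beta> \<noteq> ?s \<alpha>"
    by blast
  moreover have "\<forall>t \<in> Arc_bot_carrier ?G - {None}. \<exists>a \<in> Field K. Arc_bot_le ?G (?s a) t"
  proof
    fix t assume t: "t \<in> Arc_bot_carrier ?G - {None}"
    obtain x where x: "x \<in> gpos ?G" "t = Some (arch_class ?G x)"
      using t by (rule Arc_bot_carrierE)
    then obtain i where i: "lex_leading K x i" using gpos_lex_group[OF K] unfolding lex_pos_def by blast
    then have "i \<in> Field K" by (rule lex_leading_Field)
    then have "Arc_bot_le ?G (?s i) t"
      using arc_le_lex_group_iff[OF K lex_leading_indicator[OF K] i] Well_order_refl[OF K] x(2) by simp
    then show "\<exists>a \<in> Field K. Arc_bot_le ?G (?s a) t" using \<open>i \<in> Field K\<close> by blast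
  qed
  ultimately show ?thesis unfolding coinitial_family_def by (intro exI[of _ ?s] conjI)
qed

lemma lex_group_coinitial_family_least:
  assumes K: "Card_order K" "one_or_regularCard K"
    and \<mu>: "Card_order \<mu>" "Field \<mu> \<noteq> {}"
      "coinitial_family (Arc_bot_carrier (lex_group K)) (Arc_bot_le (lex_group K)) None \<mu>"
  shows "K \<le>o \<mu>"
proof (cases "finite (Field K) \<and> card (Field K) = 1")
  case True
  then obtain a where "Field K = {a}" by (auto simp: card_1_singleton_iff)
  then have "K \<le>o |{a}|" using card_of_Field_ordIso[OF K(1)] ordIso_iff_ordLeq by fastforce
  also have "|{a}| \<le>o \<mu>" using Card_order_singl_ordLeq[OF \<mu>(1,2)] .
  finally show ?thesis .
next
  case False
  let ?G = "lex_group K"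
  have W: "Well_order K" using K(1) by (rule card_order_on_well_order_on)
  from False have inf: "infinite (Field K)" and reg: "regularCard K" using K(2) by auto
  obtain s where s_in: "s ` Field \<mu> \<subseteq> Arc_bot_carrier ?G - {None}"
    and s_coinitial: "\<forall>t \<in> Arc_bot_carrier ?G - {None}. \<exists>\<alpha> \<in> Field \<mu>. Arc_bot_le ?G (s \<alpha>) t"
    using \<mu>(3) unfolding coinitial_family_def by blast
  have "\<exists>i x. s \<alpha> = Some (arch_class ?G x) \<and> lex_leading K x i" if "\<alpha> \<in> Field \<mu>" for \<alpha>
  proof -
    have "s \<alpha> \<in> Arc_bot_carrier ?G - {None}" using s_in that by blast
    then obtain x where "x \<in> gpos ?G" "s \<alpha> = Some (arch_class ?G x)" by (rule Arc_bot_carrierE)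
    then show ?thesis using gpos_lex_group[OF W] unfolding lex_pos_def by blast
  qed
  then obtain lead where lead:
    "\<And>\<alpha>. \<alpha> \<in> Field \<mu> \<Longrightarrow> \<exists>x. s \<alpha> = Some (arch_class ?G x) \<and> lex_leading K x (lead \<alpha>)"
    by metis
  have "lead ` Field \<mu> \<subseteq> Field K" using lead lex_leading_Field by (metis image_subsetI)
  moreover have "cofinal (lead ` Field \<mu>) K"
    unfolding cofinal_def
  proof
    fix a assume "a \<in> Field K"
    then obtain a' where a': "a' \<in> Field K" "a \<noteq> a'" "(a, a') \<in> K"
      using infinite_Card_order_limit[OF K(1) inf] by blast
    have "Some (arch_class ?G (indicator {a'})) \<in> Arc_bot_carrier ?G - {None}"
      using lex_leading_gpos[OF W lex_leading_indicator[OF W a'(1)]] unfolding Arc_bot_carrier_def Arc_def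
      by blast
    then obtain \<alpha> where \<alpha>: "\<alpha> \<in> Field \<mu>" "Arc_bot_le ?G (s \<alpha>) (Some (arch_class ?G (indicator {a'})))"
      using s_coinitial by blast
    then obtain x where x: "s \<alpha> = Some (arch_class ?G x)" "lex_leading K x (lead \<alpha>)" using lead by blast
    have "(a', lead \<alpha>) \<in> K"
      using \<alpha>(2) arc_le_lex_group_iff[OF W x(2) lex_leading_indicator[OF W a'(1)]] x(1) by simp
    then have "(a, lead \<alpha>) \<in> K" using Well_order_transD[OF W a'(3)] by blast
    moreover have "a \<noteq> lead \<alpha>" using Well_order_antisymD[OF W a'(3)] \<open>(a', lead \<alpha>) \<in> K\<close> a'(2) by blast
    ultimately show "\<exists>b \<in> lead ` Field \<mu>. a \<noteq> b \<and> (a, b) \<in> K" using \<alpha>(1) by blast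
  qed
  ultimately have "( |lead ` Field \<mu>|, K) \<in> ordIso" using reg unfolding regularCard_def by blast
  then have "K \<le>o |lead ` Field \<mu>|" using ordIso_iff_ordLeq by blast
  also have "|lead ` Field \<mu>| \<le>o |Field \<mu>|" by (rule card_of_image)
  also have "|Field \<mu>| \<le>o \<mu>" using card_of_Field_ordIso[OF \<mu>(1)] ordIso_iff_ordLeq by blast
  finally show ?thesis .
qed

lemma is_chi_lex_group:
  fixes K :: "'k rel"
  assumes "Card_order K" and "one_or_regularCard K"
  shows "\<exists>c :: ('k \<Rightarrow> int) set option rel.
      is_chi (Arc_bot_carrier (lex_group K)) (Arc_bot_le (lex_group K)) None c \<and> (c, K) \<in> ordIso"
proof (rule ex_is_chi_ordIso[OF assms(1)])
  show "Field K \<noteq> {}" using assms(2) by auto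
  show "coinitial_family (Arc_bot_carrier (lex_group K)) (Arc_bot_le (lex_group K)) None K"
    using coinitial_family_lex_group[OF card_order_on_well_order_on[OF assms(1)]] .
  show "K \<le>o \<mu>" if "Card_order \<mu>" "Field \<mu> \<noteq> {}"
    "coinitial_family (Arc_bot_carrier (lex_group K)) (Arc_bot_le (lex_group K)) None \<mu>"
    for \<mu> :: "('k \<Rightarrow> int) set option rel"
    using lex_group_coinitial_family_least[OF assms that] .
qed

theorem proposition2p50:
  fixes X :: "'a topology"
  assumes "discrete_topology (topspace X) = X"
  shows "(\<forall>\<kappa> :: 'k rel. in_MG_via X \<kappa> TYPE('g) \<longrightarrow>
            ((finite (Field \<kappa>) \<and> card (Field \<kappa>) = 1) \<or> (infinite (Field \<kappa>) \<and> regularCard \<kappa>)))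
       \<and> (\<forall>\<kappa> :: 'k rel. Card_order \<kappa> \<and>
            ((finite (Field \<kappa>) \<and> card (Field \<kappa>) = 1) \<or> (infinite (Field \<kappa>) \<and> regularCard \<kappa>))
            \<longrightarrow> in_MG_via X \<kappa> TYPE('k \<Rightarrow> int))"
proof (intro conjI allI impI)
  fix \<kappa> :: "'k rel"
  assume "in_MG_via X \<kappa> TYPE('g)"
  then obtain G :: "'g loag" and c :: "'g set option rel" where G: "is_loag G"
    and chi: "is_chi (Arc_bot_carrier G) (Arc_bot_le G) None c" and "(c, \<kappa>) \<in> ordIso"
    unfolding in_MG_via_def by blast
  moreover have "one_or_regularCard c" using is_chi_one_or_regularCard[OF transp_on_Arc_bot_le[OF G] chi] .
  moreover have "Card_order c" using chi unfolding is_chi_def by blast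
  ultimately show "one_or_regularCard \<kappa>" using one_or_regularCard_ordIso by blast
next
  fix \<kappa> :: "'k rel"
  assume \<kappa>: "Card_order \<kappa> \<and> one_or_regularCard \<kappa>"
  then have W: "Well_order \<kappa>" by (simp add: card_order_on_well_order_on)
  obtain a where "a \<in> Field \<kappa>" using \<kappa> by fastforce
  then have "indicator {a} \<in> gpos (lex_group \<kappa>)"
    using lex_leading_gpos[OF W lex_leading_indicator[OF W]] by blast
  then have "Met X (lex_group \<kappa>) \<noteq> {}" using discrete_Met_nonempty[OF lex_group_is_loag[OF W] _ assms] by blast
  moreover obtain c :: "('k \<Rightarrow> int) set option rel"
    where "is_chi (Arc_bot_carrier (lex_group \<kappa>)) (Arc_bot_le (lex_group \<kappa>)) None c" "(c, \<kappa>) \<in> ordIso"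
    using is_chi_lex_group \<kappa> by blast
  ultimately show "in_MG_via X \<kappa> TYPE('k \<Rightarrow> int)"
    unfolding in_MG_via_def using lex_group_is_loag[OF W] by blast
qed

end
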